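(* Let $N>0$, $\beta>0$, $0<\rho<1$, $\sigma>0$, $\gamma>0$ and $0\le\pi_1\le\pi_2\le 1$ be constants, and let $\Delta_1,\Delta_2:[0,\infty)\to[0,\infty)$ be continuous with $\Delta_i(t)\to0$ as $t\to+\infty$ and $\overline{\Delta}_i:=\int_0^\infty\Delta_i(t)\,dt\le N$ ($i=1,2$). Write $q(t)=\Delta_1(t)\pi_1+\Delta_2(t)(\pi_2-\pi_1)$ and consider $$S'=-\tfrac{\beta}{N}S(1-\rho)I-\tfrac{S}{N}q(t),\quad E'=\tfrac{\beta}{N}S(1-\rho)I-\sigma E,\quad I'=\sigma E-\gamma I,\quad R'=\gamma I,\quad V'=\tfrac{S}{N}q(t),$$ with initial data $S_0>0$, $E_0,I_0,R_0,V_0\ge 0$, $S_0+E_0+I_0+R_0+V_0=N$. Let $(S_\infty,0,0,N-S_\infty-V_\infty,V_\infty)$ be the limit of the solution as $t\to+\infty$. Then $$\frac{\beta(1-\rho)}{\gamma N}S_\infty-\log S_\infty+\frac{\beta(1-\rho)}{\gamma N}V_\infty=\frac{1}{N}\big(\pi_1\overline{\Delta}_1+(\pi_2-\pi_1)\overline{\Delta}_2\big)+\frac{\beta(1-\rho)}{\gamma N}(N-R_0)-\log S_0.$$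
   Context: SEIR epidemic model with vaccination in a population of constant size $N$; $R_0$ denotes the initial value of the removed compartment $R$ (not a reproductive number). The solution converges as $t\to\infty$ to a point of the form $(S_\infty,0,0,N-S_\infty-V_\infty,V_\infty)$. *)

theory Defs
  imports "HOL-Analysis.Analysis"
begin

end

theory Submission
  imports Defs
begin

(* Since R' = \<gamma> I, the S-equation says that the logarithmic derivative of S is
   -(k R' + q / N) with k = \<beta> (1 - \<rho>) / (\<gamma> N).  Hence S(t) exp (k R(t) + (1/N) \<integral>\<^sub>0\<^sup>t q)
   is a first integral of the system.  Letting t \<rightarrow> \<infinity>, using R(\<infinity>) = N - S\<^sub>\<infinity> - V\<^sub>\<infinity>,
   and taking logarithms gives the identity. *)

lemma tendsto_integral_atLeastAtMost_at_top:
  fixes h :: "real \<Rightarrow> real"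
  assumes h: "h integrable_on {a..}" and nonneg: "\<And>t. t \<ge> a \<Longrightarrow> h t \<ge> 0"
  shows "((\<lambda>b. integral {a..b} h) \<longlongrightarrow> integral {a..} h) at_top"
proof -
  have abs_int: "set_integrable lebesgue {a..} h"
    using nonnegative_absolutely_integrable_1[OF h] nonneg by auto
  have "((\<lambda>b. set_lebesgue_integral lebesgue {a..b} h)
          \<longlongrightarrow> set_lebesgue_integral lebesgue {a..} h) at_top"
    by (rule tendsto_set_lebesgue_integral_at_top[OF _ abs_int]) auto
  moreover have "set_lebesgue_integral lebesgue {a..} h = integral {a..} h"
    using set_lebesgue_integral_eq_integral(2)[OF abs_int] .
  moreover have "\<forall>\<^sub>F b in at_top. set_lebesgue_integral lebesgue {a..b} h = integral {a..b} h"
  proof (rule eventually_at_top_linorderI[of a])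
    fix b :: real
    have "set_integrable lebesgue {a..b} h"
      by (rule set_integrable_subset[OF abs_int]) auto
    then show "set_lebesgue_integral lebesgue {a..b} h = integral {a..b} h"
      by (rule set_lebesgue_integral_eq_integral(2))
  qed
  ultimately show ?thesis
    using tendsto_cong by fastforce
qed

lemma integral_has_real_derivative_atLeast:
  fixes g :: "real \<Rightarrow> real"
  assumes "continuous_on {a..} g" and "t \<ge> a"
  shows "((\<lambda>x. integral {a..x} g) has_real_derivative g t) (at t within {a..})"
proof -
  have "((\<lambda>x. integral {a..x} g) has_real_derivative g t) (at t within {a..t+1})"
    using assms by (intro integral_has_real_derivative continuous_on_subset[OF assms(1)]) auto
  moreover have "at t within {a..t+1} = at t within {a..}"
    by (rule at_within_nhd[where S = "{..<t+1}"]) auto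
  ultimately show ?thesis
    by simp
qed

lemma mult_exp_constant_if_log_deriv:
  fixes f u u' :: "real \<Rightarrow> real"
  assumes "convex T"
    and df: "\<And>t. t \<in> T \<Longrightarrow> (f has_real_derivative - f t * u' t) (at t within T)"
    and du: "\<And>t. t \<in> T \<Longrightarrow> (u has_real_derivative u' t) (at t within T)"
    and "x \<in> T" "y \<in> T"
  shows "f x * exp (u x) = f y * exp (u y)"
proof -
  have "\<exists>c. \<forall>t\<in>T. f t * exp (u t) = c"
  proof (rule has_field_derivative_zero_constant[OF \<open>convex T\<close>])
    fix t assume "t \<in> T"
    have "((\<lambda>t. f t * exp (u t)) has_real_derivative
            - f t * u' t * exp (u t) + f t * (exp (u t) * u' t)) (at t within T)"
      using DERIV_mult[OF df DERIV_chain2[OF DERIV_exp du]] \<open>t \<in> T\<close> by simp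
    then show "((\<lambda>t. f t * exp (u t)) has_real_derivative 0) (at t within T)"
      by (rule DERIV_cong) (simp add: algebra_simps)
  qed
  with assms(4,5) show ?thesis
    by metis
qed

lemma mult_exp_integral_eq_initial:
  fixes f R r g :: "real \<Rightarrow> real"
  assumes g: "continuous_on {a..} g"
    and dR: "\<And>t. t \<ge> a \<Longrightarrow> (R has_real_derivative r t) (at t within {a..})"
    and df: "\<And>t. t \<ge> a \<Longrightarrow>
               (f has_real_derivative - f t * (k * r t + c * g t)) (at t within {a..})"
    and "t \<ge> a"
  shows "f t * exp (k * R t + c * integral {a..t} g) = f a * exp (k * R a)"
proof -
  have "f t * exp (k * R t + c * integral {a..t} g) = f a * exp (k * R a + c * integral {a..a} g)"
  proof (rule mult_exp_constant_if_log_deriv[where u' = "\<lambda>t. k * r t + c * g t"])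
    fix t :: real assume "t \<in> {a..}"
    then show "((\<lambda>t. k * R t + c * integral {a..t} g) has_real_derivative k * r t + c * g t)
                 (at t within {a..})"
      by (auto intro: DERIV_add[OF DERIV_cmult[OF dR]
                DERIV_cmult[OF integral_has_real_derivative_atLeast[OF g]]])
  qed (use df \<open>t \<ge> a\<close> in auto)
  then show ?thesis
    by simp
qed

lemma ln_eq_of_mult_exp_eq:
  fixes x y a b :: real
  assumes "x * exp a = y * exp b" and "y > 0"
  shows "ln x + a = ln y + b"
proof -
  have "x > 0"
    using assms by (metis exp_gt_zero mult_pos_pos zero_less_mult_pos2)
  then have "ln (x * exp a) = ln (y * exp b)"
    using assms(1) by simp
  with \<open>x > 0\<close> \<open>y > 0\<close> show ?thesis
    by (simp add: ln_mult)
qed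

theorem mainTheorem3:
  fixes N \<beta> \<rho> \<sigma> \<gamma> \<pi>1 \<pi>2 :: real
    and \<Delta>1 \<Delta>2 :: "real \<Rightarrow> real"
    and S E I R V :: "real \<Rightarrow> real"
    and S0 E0 I0 R0 V0 S_inf V_inf :: real
  assumes N: "N > 0" and beta: "\<beta> > 0" and rho: "0 < \<rho>" "\<rho> < 1"
    and sigma: "\<sigma> > 0" and gamma: "\<gamma> > 0"
    and pi: "0 \<le> \<pi>1" "\<pi>1 \<le> \<pi>2" "\<pi>2 \<le> 1"
    and D1_cont: "continuous_on {0..} \<Delta>1" and D2_cont: "continuous_on {0..} \<Delta>2"
    and D1_nn: "\<And>t. t \<ge> 0 \<Longrightarrow> \<Delta>1 t \<ge> 0"
    and D2_nn: "\<And>t. t \<ge> 0 \<Longrightarrow> \<Delta>2 t \<ge> 0"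
    and D1_lim: "(\<Delta>1 \<longlongrightarrow> 0) at_top" and D2_lim: "(\<Delta>2 \<longlongrightarrow> 0) at_top"
    and D1_int: "\<Delta>1 integrable_on {0..}" and D2_int: "\<Delta>2 integrable_on {0..}"
    and D1_bd: "integral {0..} \<Delta>1 \<le> N" and D2_bd: "integral {0..} \<Delta>2 \<le> N"
    and dS: "\<And>t. t \<ge> 0 \<Longrightarrow> (S has_real_derivative
               (- \<beta> / N * S t * (1 - \<rho>) * I t
                - S t / N * (\<Delta>1 t * \<pi>1 + \<Delta>2 t * (\<pi>2 - \<pi>1)))) (at t within {0..})"
    and dE: "\<And>t. t \<ge> 0 \<Longrightarrow> (E has_real_derivative
               (\<beta> / N * S t * (1 - \<rho>) * I t - \<sigma> * E t)) (at t within {0..})"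
    and dI: "\<And>t. t \<ge> 0 \<Longrightarrow> (I has_real_derivative (\<sigma> * E t - \<gamma> * I t)) (at t within {0..})"
    and dR: "\<And>t. t \<ge> 0 \<Longrightarrow> (R has_real_derivative (\<gamma> * I t)) (at t within {0..})"
    and dV: "\<And>t. t \<ge> 0 \<Longrightarrow> (V has_real_derivative
               (S t / N * (\<Delta>1 t * \<pi>1 + \<Delta>2 t * (\<pi>2 - \<pi>1)))) (at t within {0..})"
    and init: "S 0 = S0" "E 0 = E0" "I 0 = I0" "R 0 = R0" "V 0 = V0"
    and init_pos: "S0 > 0" "E0 \<ge> 0" "I0 \<ge> 0" "R0 \<ge> 0" "V0 \<ge> 0"
    and init_sum: "S0 + E0 + I0 + R0 + V0 = N"
    and limS: "(S \<longlongrightarrow> S_inf) at_top" and limE: "(E \<longlongrightarrow> 0) at_top"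
    and limI: "(I \<longlongrightarrow> 0) at_top" and limR: "(R \<longlongrightarrow> N - S_inf - V_inf) at_top"
    and limV: "(V \<longlongrightarrow> V_inf) at_top"
  shows "\<beta> * (1 - \<rho>) / (\<gamma> * N) * S_inf - ln S_inf + \<beta> * (1 - \<rho>) / (\<gamma> * N) * V_inf
         = 1 / N * (\<pi>1 * integral {0..} \<Delta>1 + (\<pi>2 - \<pi>1) * integral {0..} \<Delta>2)
           + \<beta> * (1 - \<rho>) / (\<gamma> * N) * (N - R0) - ln S0"
proof -
  define q where "q t = \<Delta>1 t * \<pi>1 + \<Delta>2 t * (\<pi>2 - \<pi>1)" for t
  define k where "k = \<beta> * (1 - \<rho>) / (\<gamma> * N)"
  define u where "u t = k * R t + 1 / N * integral {0..t} q" for t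
  define Q where "Q = integral {0..} q"
  have q_cont: "continuous_on {0..} q"
    unfolding q_def by (intro continuous_intros D1_cont D2_cont)
  have q_int: "q integrable_on {0..}"
    unfolding q_def by (intro integrable_add integrable_on_mult_left D1_int D2_int)
  have Q_eq: "Q = \<pi>1 * integral {0..} \<Delta>1 + (\<pi>2 - \<pi>1) * integral {0..} \<Delta>2"
    unfolding Q_def q_def
    by (subst integral_add)
       (auto simp: integrable_on_mult_left integrable_on_mult_right D1_int D2_int mult.commute)
  have first_integral: "S t * exp (u t) = S0 * exp (k * R0)" if "t \<ge> 0" for t
    unfolding u_def init[symmetric]
  proof (rule mult_exp_integral_eq_initial[OF q_cont dR _ that, where c = "1 / N"])
    fix t :: real assume "t \<ge> 0"
    then show "(S has_real_derivative - S t * (k * (\<gamma> * I t) + 1 / N * q t)) (at t within {0..})"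
      by (intro DERIV_cong[OF dS[of t]]) (use N gamma in \<open>auto simp: k_def q_def field_simps\<close>)
  qed
  have "((\<lambda>t. integral {0..t} q) \<longlongrightarrow> Q) at_top"
    unfolding Q_def using D1_nn D2_nn pi
    by (intro tendsto_integral_atLeastAtMost_at_top q_int) (simp add: q_def)
  then have lim: "((\<lambda>t. S t * exp (u t)) \<longlongrightarrow> S_inf * exp (k * (N - S_inf - V_inf) + 1 / N * Q)) at_top"
    unfolding u_def by (intro tendsto_intros limS limR)
  have "\<forall>\<^sub>F t in at_top. S t * exp (u t) = S0 * exp (k * R0)"
    using first_integral by (intro eventually_at_top_linorderI[of 0])
  from Lim_transform_eventually[OF lim this]
  have "S_inf * exp (k * (N - S_inf - V_inf) + 1 / N * Q) = S0 * exp (k * R0)"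
    by (simp add: tendsto_const_iff)
  then have "ln S_inf + (k * (N - S_inf - V_inf) + 1 / N * Q) = ln S0 + k * R0"
    using init_pos(1) by (rule ln_eq_of_mult_exp_eq)
  then show ?thesis
    unfolding Q_eq k_def[symmetric] by (simp add: field_simps)
qed

end
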